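(* There exist universal constants $C,c>0$ such that the following holds. Let $(X_i,Y_i)_{i=1}^{3n}$ be a stationary two-state hidden Markov model as in the context whose hidden chain has absolute spectral gap at least $\gamma^*$, i.e. $1-|1-p-q|\ge\gamma^*$. Let $Y'=(Y_1,\dots,Y_n)$ and $\tilde Y'=(Y_{2n+1},\dots,Y_{3n})$, let $\mathbb{P}_{(Y',\tilde Y')}$ be the joint law of $(Y',\tilde Y')$ and $\mathbb{P}_{Y'}$ the law of $Y'$. Then $$\|\mathbb{P}_{(Y',\tilde Y')}-\mathbb{P}_{Y'}^{\otimes2}\|_{TV}\le Ce^{-c\gamma^*n}.$$
   Context: Model: parameter $\theta=(p,q,f_0,f_1)$ with $p,q\in(0,1]$ and $f_0,f_1$ probability densities on $[0,1]$; $(X_i)$ is a Markov chain on $\{0,1\}$ started from its stationary distribution with transition matrix $\begin{pmatrix}1-p&p\\ q&1-q\end{pmatrix}$, and conditionally on $(X_i)$ the $Y_i$ are independent with densities $f_{X_i}$. $\mathbb{P}_{Y'}^{\otimes2}$ denotes the product of two copies of $\mathbb{P}_{Y'}$, and $\|\cdot\|_{TV}$ is the total variation norm. *)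

theory Defs
  imports "HOL-Probability.Probability"
begin

text \<open>Two-state HMM. Hidden states: False = state 0, True = state 1.
  Transition matrix ((1-p, p), (q, 1-q)).\<close>

definition trans_prob :: "real \<Rightarrow> real \<Rightarrow> bool \<Rightarrow> bool \<Rightarrow> real" where
  "trans_prob p q a b =
     (if \<not> a then (if b then p else 1 - p) else (if b then 1 - q else q))"

definition stat_prob :: "real \<Rightarrow> real \<Rightarrow> bool \<Rightarrow> real" where
  "stat_prob p q a = (if a then p / (p + q) else q / (p + q))"

text \<open>Probability of the hidden path x(0),...,x(N-1) (X_{i+1} = x i),
  chain started from stationarity.\<close>
definition path_prob :: "real \<Rightarrow> real \<Rightarrow> nat \<Rightarrow> (nat \<Rightarrow> bool) \<Rightarrow> real" where
  "path_prob p q N x =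
     (if N = 0 then 1
      else stat_prob p q (x 0) * (\<Prod>i<N - 1. trans_prob p q (x i) (x (Suc i))))"

definition emis :: "(real \<Rightarrow> real) \<Rightarrow> (real \<Rightarrow> real) \<Rightarrow> bool \<Rightarrow> real \<Rightarrow> real" where
  "emis f0 f1 b y = (if b then f1 y else f0 y) * indicator {0..1} y"

text \<open>Joint law of (Y_1,...,Y_N) (Y_{i+1} = y i) on the product space, given by its
  density w.r.t. N-dimensional Lebesgue measure (mixture over hidden paths).\<close>
definition hmm_law :: "real \<Rightarrow> real \<Rightarrow> (real \<Rightarrow> real) \<Rightarrow> (real \<Rightarrow> real) \<Rightarrow> nat
    \<Rightarrow> (nat \<Rightarrow> real) measure" where
  "hmm_law p q f0 f1 N =
     density (PiM {..<N} (\<lambda>_. lborel))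
       (\<lambda>y. ennreal (\<Sum>x \<in> {..<N} \<rightarrow>\<^sub>E (UNIV :: bool set).
              path_prob p q N x * (\<Prod>i<N. emis f0 f1 (x i) (y i))))"

definition law_Y' :: "real \<Rightarrow> real \<Rightarrow> (real \<Rightarrow> real) \<Rightarrow> (real \<Rightarrow> real) \<Rightarrow> nat
    \<Rightarrow> (nat \<Rightarrow> real) measure" where
  "law_Y' p q f0 f1 n =
     distr (hmm_law p q f0 f1 (3 * n)) (PiM {..<n} (\<lambda>_. lborel))
       (\<lambda>y. restrict y {..<n})"

text \<open>Joint law of (Y', Y~') with Y~' = (Y_{2n+1},...,Y_{3n}).\<close>
definition law_pair :: "real \<Rightarrow> real \<Rightarrow> (real \<Rightarrow> real) \<Rightarrow> (real \<Rightarrow> real) \<Rightarrow> nat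
    \<Rightarrow> ((nat \<Rightarrow> real) \<times> (nat \<Rightarrow> real)) measure" where
  "law_pair p q f0 f1 n =
     distr (hmm_law p q f0 f1 (3 * n))
       (PiM {..<n} (\<lambda>_. lborel) \<Otimes>\<^sub>M PiM {..<n} (\<lambda>_. lborel))
       (\<lambda>y. (restrict y {..<n}, restrict (\<lambda>i. y (2 * n + i)) {..<n}))"

definition tv_dist :: "'a measure \<Rightarrow> 'a measure \<Rightarrow> real" where
  "tv_dist M N = (SUP A \<in> sets M. \<bar>measure M A - measure N A\<bar>)"

definition prob_density01 :: "(real \<Rightarrow> real) \<Rightarrow> bool" where
  "prob_density01 f \<longleftrightarrow> f \<in> borel_measurable borel \<and> (\<forall>x\<in>{0..1}. 0 \<le> f x) \<and>
     (\<integral>\<^sup>+ x. ennreal (f x * indicator {0..1} x) \<partial>lborel) = 1"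

end

theory Submission
  imports Defs
begin

text \<open>Given the hidden path, the observations are independent, so the joint law of the two
  blocks and the product of their marginals are mixtures of the same product measures, weighted
  by the path probabilities of the two hidden blocks: jointly in the first case, independently
  in the second. Summing out the hidden middle block of length \<open>n\<close>, the two weights differ only
  in that the stationary probability \<open>\<pi>(c)\<close> of the first state \<open>c\<close> of the last block is replaced
  by the \<open>(n + 1)\<close>-step transition probability \<open>\<pi>(c) + (1 - p - q)\<^sup>n\<^sup>+\<^sup>1 (\<delta>\<^sub>a\<^sub>c - \<pi>(c))\<close> from
  the last state \<open>a\<close> of the first block. Hence the probabilities of any event differ by at most
  \<open>2 \<bar>1 - p - q\<bar>\<^sup>n\<^sup>+\<^sup>1 \<le> 2 exp (- \<gamma> n)\<close>.\<close>

definition paths :: "nat \<Rightarrow> (nat \<Rightarrow> bool) set" where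
  "paths N = {..<N} \<rightarrow>\<^sub>E (UNIV :: bool set)"

definition append_path :: "nat \<Rightarrow> (nat \<Rightarrow> bool) \<Rightarrow> (nat \<Rightarrow> bool) \<Rightarrow> nat \<Rightarrow> bool" where
  "append_path a u v = (\<lambda>i. if i < a then u i else v (i - a))"

lemma finite_paths [simp]: "finite (paths N)"
  unfolding paths_def by (intro finite_PiE) auto

lemma paths_0: "paths 0 = {\<lambda>_. undefined}"
  by (simp add: paths_def)

lemma bij_betw_append_path:
  "bij_betw (\<lambda>(u, v). append_path a u v) (paths a \<times> paths b) (paths (a + b))"
proof (rule bij_betw_byWitness[where f' = "\<lambda>x. (restrict x {..<a}, \<lambda>i\<in>{..<b}. x (a + i))"])
qed (auto simp: paths_def append_path_def PiE_def extensional_def fun_eq_iff)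

lemma sum_paths_add:
  "(\<Sum>x\<in>paths (a + b). F x) = (\<Sum>u\<in>paths a. \<Sum>v\<in>paths b. F (append_path a u v))"
  by (subst sum.reindex_bij_betw[OF bij_betw_append_path, symmetric])
     (simp add: sum.cartesian_product case_prod_unfold)

lemma sum_paths_Suc_0: "(\<Sum>x\<in>paths (Suc 0). G (x 0)) = (\<Sum>c\<in>UNIV. G c)"
  by (rule sum.reindex_bij_witness[where j = "\<lambda>x. x 0" and i = "\<lambda>c. \<lambda>i\<in>{..<Suc 0}. c"])
     (auto simp: paths_def PiE_def extensional_def fun_eq_iff)

lemma restrict_append_path: "u \<in> paths a \<Longrightarrow> restrict (append_path a u v) {..<a} = u"
  by (auto simp: paths_def append_path_def PiE_def extensional_def fun_eq_iff)

lemma restrict_paths: "v \<in> paths b \<Longrightarrow> restrict v {..<b} = v"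
  by (auto simp: paths_def PiE_def extensional_def fun_eq_iff)

lemma append_path_add [simp]: "append_path a u v (a + i) = v i"
  by (simp add: append_path_def)

text \<open>For \<open>N = 0\<close> the weight is \<open>\<mu> (x 0)\<close> rather than \<open>1\<close>; it is only used for \<open>N \<ge> 1\<close>.\<close>
definition chain_weight :: "real \<Rightarrow> real \<Rightarrow> (bool \<Rightarrow> real) \<Rightarrow> nat \<Rightarrow> (nat \<Rightarrow> bool) \<Rightarrow> real" where
  "chain_weight p q \<mu> N x = \<mu> (x 0) * (\<Prod>i<N - 1. trans_prob p q (x i) (x (Suc i)))"

lemma path_prob_eq_chain_weight:
  "1 \<le> N \<Longrightarrow> path_prob p q N x = chain_weight p q (stat_prob p q) N x"
  by (simp add: path_prob_def chain_weight_def)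

lemma chain_weight_eq_initial_times_transitions:
  "chain_weight p q \<mu> N x = \<mu> (x 0) * chain_weight p q (\<lambda>_. 1) N x"
  by (simp add: chain_weight_def)

lemma prod_lessThan_add:
  "(\<Prod>i<m + k. g i) = (\<Prod>i<m. g i) * (\<Prod>i<k. g (m + i))" for g :: "nat \<Rightarrow> 'a::comm_monoid_mult"
  by (induction k) (auto simp: ac_simps)

lemma chain_weight_append_path:
  assumes "1 \<le> a" "1 \<le> b"
  shows "chain_weight p q \<mu> (a + b) (append_path a u v)
       = chain_weight p q \<mu> a u * chain_weight p q (trans_prob p q (u (a - 1))) b v"
proof -
  let ?g = "\<lambda>i. trans_prob p q (append_path a u v i) (append_path a u v (Suc i))"
  have "a + b - 1 = (a - 1) + Suc (b - 1)" using assms by simp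
  then have "(\<Prod>i<a + b - 1. ?g i) = (\<Prod>i<a - 1. ?g i) * (\<Prod>i<Suc (b - 1). ?g (a - 1 + i))"
    by (simp only: prod_lessThan_add)
  also have "(\<Prod>i<Suc (b - 1). ?g (a - 1 + i)) = ?g (a - 1) * (\<Prod>i<b - 1. ?g (a + i))"
    using assms by (subst prod.lessThan_Suc_shift) simp
  also have "(\<Prod>i<a - 1. ?g i) = (\<Prod>i<a - 1. trans_prob p q (u i) (u (Suc i)))"
    by (auto simp: append_path_def intro!: prod.cong)
  also have "(\<Prod>i<b - 1. ?g (a + i)) = (\<Prod>i<b - 1. trans_prob p q (v i) (v (Suc i)))"
    by (auto simp: append_path_def intro!: prod.cong)
  finally show ?thesis
    using assms by (simp add: chain_weight_def append_path_def ac_simps)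
qed

text \<open>The \<open>k\<close>-step transition probabilities, in closed form: the transition matrix has
  eigenvalues \<open>1\<close> and \<open>1 - p - q\<close>.\<close>
definition trans_power :: "real \<Rightarrow> real \<Rightarrow> nat \<Rightarrow> bool \<Rightarrow> bool \<Rightarrow> real" where
  "trans_power p q k a c =
     stat_prob p q c + (1 - p - q) ^ k * (of_bool (a = c) - stat_prob p q c)"

lemma stat_prob_False: "0 < p + q \<Longrightarrow> stat_prob p q False = 1 - stat_prob p q True"
  by (simp add: stat_prob_def field_simps)

lemma trans_power_0: "trans_power p q 0 a c = of_bool (a = c)"
  by (simp add: trans_power_def)

lemma trans_power_1:
  assumes "0 < p + q"
  shows "trans_power p q 1 a c = trans_prob p q a c"
proof -
  have "(p + q) * stat_prob p q c = (if c then p else q)"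
    using assms by (simp add: stat_prob_def)
  then show ?thesis
    by (cases a; cases c) (simp_all add: trans_power_def trans_prob_def algebra_simps)
qed

lemma trans_power_add:
  assumes "0 < p + q"
  shows "(\<Sum>b\<in>UNIV. trans_power p q j a b * trans_power p q k b c) = trans_power p q (j + k) a c"
  by (cases a; cases c)
     (simp_all add: trans_power_def UNIV_bool power_add stat_prob_False[OF assms] algebra_simps)

lemma sum_trans_power: "0 < p + q \<Longrightarrow> (\<Sum>c\<in>UNIV. trans_power p q k a c) = 1"
  by (cases a) (auto simp: trans_power_def UNIV_bool algebra_simps stat_prob_False)

lemma abs_trans_power_minus_stat_prob:
  assumes "0 < p" "0 < q"
  shows "\<bar>trans_power p q k a c - stat_prob p q c\<bar> \<le> \<bar>1 - p - q\<bar> ^ k"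
proof -
  have "\<bar>of_bool (a = c) - stat_prob p q c\<bar> \<le> 1"
    using assms by (auto simp: stat_prob_def)
  then show ?thesis
    by (simp add: trans_power_def abs_mult power_abs mult_left_le)
qed

lemma sum_chain_weight_last:
  assumes "0 < p + q"
  shows "(\<Sum>x\<in>paths (Suc m). chain_weight p q \<mu> (Suc m) x * h (x m)) =
     (\<Sum>c\<in>UNIV. (\<Sum>b\<in>UNIV. \<mu> b * trans_power p q m b c) * h c)"
proof (induction m arbitrary: h)
  case 0
  show ?case using sum_paths_Suc_0[of "\<lambda>c. \<mu> c * h c"]
    by (simp add: chain_weight_def trans_power_0 UNIV_bool)
next
  case (Suc m)
  let ?T = "trans_prob p q"
  have "(\<Sum>x\<in>paths (Suc m + 1). chain_weight p q \<mu> (Suc m + 1) x * h (x (Suc m))) =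
      (\<Sum>u\<in>paths (Suc m). \<Sum>v\<in>paths 1. chain_weight p q \<mu> (Suc m) u * (?T (u m) (v 0) * h (v 0)))"
    by (subst sum_paths_add, intro sum.cong refl, subst chain_weight_append_path)
       (auto simp: append_path_def chain_weight_def)
  also have "\<dots> = (\<Sum>u\<in>paths (Suc m). chain_weight p q \<mu> (Suc m) u * (\<Sum>d\<in>UNIV. ?T (u m) d * h d))"
    by (simp add: sum_distrib_left[symmetric] sum_paths_Suc_0[of "\<lambda>d. ?T _ d * h d"])
  also have "\<dots> = (\<Sum>c\<in>UNIV. (\<Sum>b\<in>UNIV. \<mu> b * trans_power p q m b c) * (\<Sum>d\<in>UNIV. ?T c d * h d))"
    by (rule Suc)
  also have "\<dots> = (\<Sum>d\<in>UNIV. (\<Sum>b\<in>UNIV. \<mu> b * (\<Sum>c\<in>UNIV. trans_power p q m b c * ?T c d)) * h d)"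
    by (simp add: UNIV_bool algebra_simps)
  also have "\<dots> = (\<Sum>d\<in>UNIV. (\<Sum>b\<in>UNIV. \<mu> b * trans_power p q (Suc m) b d) * h d)"
    using trans_power_add[OF assms, of m _ 1, unfolded trans_power_1[OF assms]] by simp
  finally show ?case by simp
qed

lemma sum_chain_weight:
  assumes "0 < p + q"
  shows "(\<Sum>x\<in>paths (Suc m). chain_weight p q \<mu> (Suc m) x) = (\<Sum>b\<in>UNIV. \<mu> b)"
proof -
  have "(\<Sum>x\<in>paths (Suc m). chain_weight p q \<mu> (Suc m) x)
      = (\<Sum>c\<in>UNIV. \<Sum>b\<in>UNIV. \<mu> b * trans_power p q m b c)"
    using sum_chain_weight_last[OF assms, where h = "\<lambda>_. 1"] by simp
  also have "\<dots> = (\<Sum>b\<in>UNIV. \<mu> b)"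
    by (subst sum.swap) (simp add: sum_distrib_left[symmetric] sum_trans_power[OF assms])
  finally show ?thesis .
qed

lemma chain_weight_nonneg:
  assumes "0 \<le> p" "p \<le> 1" "0 \<le> q" "q \<le> 1" "\<And>b. 0 \<le> \<mu> b"
  shows "0 \<le> chain_weight p q \<mu> N x"
  using assms unfolding chain_weight_def trans_prob_def
  by (intro mult_nonneg_nonneg prod_nonneg) auto

lemma sum_chain_weight_prefix:
  assumes "0 < p + q" "1 \<le> a" "1 \<le> b"
  shows "(\<Sum>x\<in>paths (a + b). chain_weight p q \<mu> (a + b) x * G (restrict x {..<a}))
       = (\<Sum>z\<in>paths a. chain_weight p q \<mu> a z * G z)"
proof -
  have tail: "(\<Sum>v\<in>paths b. chain_weight p q (trans_prob p q c) b v) = 1" for c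
    using sum_chain_weight[OF assms(1), where m = "b - 1" and \<mu> = "trans_prob p q c"] assms(3)
    by (simp add: UNIV_bool trans_prob_def)
  have "(\<Sum>x\<in>paths (a + b). chain_weight p q \<mu> (a + b) x * G (restrict x {..<a})) =
      (\<Sum>z\<in>paths a. chain_weight p q \<mu> a z * G z *
         (\<Sum>v\<in>paths b. chain_weight p q (trans_prob p q (z (a - 1))) b v))"
    by (simp add: sum_paths_add restrict_append_path chain_weight_append_path[OF assms(2,3)]
        sum_distrib_left ac_simps)
  then show ?thesis by (simp add: tail)
qed

lemma sum_chain_weight_prefix_pair:
  assumes "0 < p + q" "1 \<le> a" "1 \<le> b"
  shows "(\<Sum>x\<in>paths (a + b). \<Sum>x'\<in>paths (a + b).
           chain_weight p q \<mu> (a + b) x * chain_weight p q \<mu> (a + b) x' *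
           G (restrict x {..<a}) (restrict x' {..<a}))
       = (\<Sum>z\<in>paths a. \<Sum>z'\<in>paths a. chain_weight p q \<mu> a z * chain_weight p q \<mu> a z' * G z z')"
proof -
  let ?w = "chain_weight p q \<mu>"
  have "(\<Sum>x\<in>paths (a + b). \<Sum>x'\<in>paths (a + b). ?w (a + b) x * ?w (a + b) x' *
           G (restrict x {..<a}) (restrict x' {..<a}))
      = (\<Sum>x\<in>paths (a + b). ?w (a + b) x * (\<lambda>z. \<Sum>x'\<in>paths (a + b). ?w (a + b) x' *
           (\<lambda>z'. G z z') (restrict x' {..<a})) (restrict x {..<a}))"
    by (simp add: sum_distrib_left ac_simps)
  also have "\<dots> = (\<Sum>z\<in>paths a. ?w a z *
      (\<Sum>x'\<in>paths (a + b). ?w (a + b) x' * (\<lambda>z'. G z z') (restrict x' {..<a})))"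
    by (rule sum_chain_weight_prefix[OF assms])
  also have "\<dots> = (\<Sum>z\<in>paths a. ?w a z * (\<Sum>z'\<in>paths a. ?w a z' * G z z'))"
    by (simp only: sum_chain_weight_prefix[OF assms])
  finally show ?thesis
    by (simp add: sum_distrib_left ac_simps)
qed

lemma sum_chain_weight_gap:
  assumes pq: "0 < p + q" and "1 \<le> a" "1 \<le> k" "1 \<le> b"
  shows "(\<Sum>x\<in>paths (a + (k + b)). chain_weight p q \<mu> (a + (k + b)) x *
           G (restrict x {..<a}) (\<lambda>i\<in>{..<b}. x (a + k + i)))
       = (\<Sum>z\<in>paths a. \<Sum>z'\<in>paths b. chain_weight p q \<mu> a z *
           trans_power p q (Suc k) (z (a - 1)) (z' 0) * chain_weight p q (\<lambda>_. 1) b z' * G z z')"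
proof -
  let ?T = "trans_prob p q" and ?w = "chain_weight p q"
  have bridge: "(\<Sum>m\<in>paths k. ?w (?T c) k m * ?w (?T (m (k - 1))) b z')
      = trans_power p q (Suc k) c (z' 0) * ?w (\<lambda>_. 1) b z'" for c z'
  proof -
    obtain j where k: "k = Suc j" using \<open>1 \<le> k\<close> by (cases k) auto
    have "(\<Sum>m\<in>paths k. ?w (?T c) k m * ?w (?T (m (k - 1))) b z')
        = (\<Sum>m\<in>paths (Suc j). ?w (?T c) (Suc j) m * (?T (m j) (z' 0) * ?w (\<lambda>_. 1) b z'))"
      by (simp add: k chain_weight_def)
    also have "\<dots> = (\<Sum>d\<in>UNIV. (\<Sum>e\<in>UNIV. ?T c e * trans_power p q j e d) * (?T d (z' 0) * ?w (\<lambda>_. 1) b z'))"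
      by (rule sum_chain_weight_last[OF pq])
    also have "\<dots> = (\<Sum>d\<in>UNIV. trans_power p q k c d * ?T d (z' 0)) * ?w (\<lambda>_. 1) b z'"
      using trans_power_add[OF pq, where j = 1 and a = c and k = j, unfolded trans_power_1[OF pq]]
      by (simp add: k sum_distrib_left sum_distrib_right ac_simps)
    also have "\<dots> = trans_power p q (Suc k) c (z' 0) * ?w (\<lambda>_. 1) b z'"
      using trans_power_add[OF pq, where j = k and a = c and k = 1, unfolded trans_power_1[OF pq]]
      by simp
    finally show ?thesis .
  qed
  have "(\<Sum>x\<in>paths (a + (k + b)). ?w \<mu> (a + (k + b)) x *
           G (restrict x {..<a}) (\<lambda>i\<in>{..<b}. x (a + k + i)))
      = (\<Sum>z\<in>paths a. \<Sum>m\<in>paths k. \<Sum>z'\<in>paths b.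
           ?w \<mu> a z * (?w (?T (z (a - 1))) k m * ?w (?T (m (k - 1))) b z') * G z z')"
    using assms
    by (simp add: sum_paths_add restrict_append_path restrict_paths add.assoc
        chain_weight_append_path)
  also have "\<dots> = (\<Sum>z\<in>paths a. \<Sum>z'\<in>paths b. ?w \<mu> a z * G z z' *
           (\<Sum>m\<in>paths k. ?w (?T (z (a - 1))) k m * ?w (?T (m (k - 1))) b z'))"
    by (rule sum.cong[OF refl], subst sum.swap) (simp add: sum_distrib_left ac_simps)
  also have "\<dots> = (\<Sum>z\<in>paths a. \<Sum>z'\<in>paths b. ?w \<mu> a z *
           trans_power p q (Suc k) (z (a - 1)) (z' 0) * ?w (\<lambda>_. 1) b z' * G z z')"
    by (simp only: bridge) (simp add: ac_simps)
  finally show ?thesis .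
qed

lemma abs_sum_trans_power_deviation_le:
  assumes p: "0 < p" "p \<le> 1" and q: "0 < q" "q \<le> 1" and "1 \<le> a" "1 \<le> b"
    and F: "\<And>z z'. 0 \<le> F z z'" "\<And>z z'. F z z' \<le> 1"
  shows "\<bar>\<Sum>z\<in>paths a. \<Sum>z'\<in>paths b. chain_weight p q (stat_prob p q) a z *
           chain_weight p q (\<lambda>_. 1) b z' *
           ((trans_power p q k (z (a - 1)) (z' 0) - stat_prob p q (z' 0)) * F z z')\<bar>
       \<le> 2 * \<bar>1 - p - q\<bar> ^ k"
proof -
  let ?w = "chain_weight p q (stat_prob p q) a" and ?v = "chain_weight p q (\<lambda>_. 1) b"
  let ?L = "\<bar>1 - p - q\<bar> ^ k"
  have pq: "0 < p + q" using p q by simp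
  have "?w z \<ge> 0" "?v z' \<ge> 0" for z z'
    using p q by (auto intro!: chain_weight_nonneg simp: stat_prob_def)
  moreover have "\<bar>(trans_power p q k (z (a - 1)) (z' 0) - stat_prob p q (z' 0)) * F z z'\<bar> \<le> ?L"
    for z z'
    using abs_trans_power_minus_stat_prob[OF p(1) q(1), of k "z (a - 1)" "z' 0"] F[of z z']
    by (simp add: abs_mult) (meson abs_ge_zero mult_right_le_one_le order_trans)
  ultimately have "\<bar>\<Sum>z\<in>paths a. \<Sum>z'\<in>paths b. ?w z * ?v z' *
        ((trans_power p q k (z (a - 1)) (z' 0) - stat_prob p q (z' 0)) * F z z')\<bar>
      \<le> (\<Sum>z\<in>paths a. \<Sum>z'\<in>paths b. ?w z * ?v z' * ?L)"
    by (intro order_trans[OF sum_abs sum_mono] order_trans[OF sum_abs sum_mono])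
       (simp add: abs_mult mult_left_mono)
  also have "\<dots> = ?L * (\<Sum>z\<in>paths a. ?w z) * (\<Sum>z'\<in>paths b. ?v z')"
    by (simp add: sum_distrib_left sum_distrib_right ac_simps)
  also have "\<dots> = 2 * ?L"
    using sum_chain_weight[OF pq, where m = "a - 1"] sum_chain_weight[OF pq, where m = "b - 1"]
      \<open>1 \<le> a\<close> \<open>1 \<le> b\<close> stat_prob_False[OF pq]
    by (simp add: UNIV_bool)
  finally show ?thesis .
qed

lemma abs_sum_path_prob_gap_le:
  assumes p: "0 < p" "p \<le> 1" and q: "0 < q" "q \<le> 1"
    and F: "\<And>z z'. 0 \<le> F z z'" "\<And>z z'. F z z' \<le> 1"
  shows "\<bar>(\<Sum>x\<in>paths (3 * n). path_prob p q (3 * n) x *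
             F (restrict x {..<n}) (\<lambda>i\<in>{..<n}. x (2 * n + i)))
         - (\<Sum>x\<in>paths (3 * n). \<Sum>x'\<in>paths (3 * n). path_prob p q (3 * n) x * path_prob p q (3 * n) x' *
             F (restrict x {..<n}) (restrict x' {..<n}))\<bar>
       \<le> 2 * \<bar>1 - p - q\<bar> ^ (n + 1)"
proof (cases "n = 0")
  case True
  then show ?thesis by (simp add: paths_0 path_prob_def)
next
  case False
  then have n: "1 \<le> n" "1 \<le> n + n" by simp_all
  have pq: "0 < p + q" using p q by simp
  define \<pi> where "\<pi> = stat_prob p q"
  define w where "w = chain_weight p q \<pi> n"
  define v where "v = chain_weight p q (\<lambda>_. 1) n"
  have blocks: "3 * n = n + (n + n)" "2 * n = n + n" by simp_all
  have path_prob_3n: "path_prob p q (n + (n + n)) x = chain_weight p q \<pi> (n + (n + n)) x" for x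
    using n by (simp add: path_prob_eq_chain_weight \<pi>_def)
  have joint: "(\<Sum>x\<in>paths (3 * n). path_prob p q (3 * n) x *
        F (restrict x {..<n}) (\<lambda>i\<in>{..<n}. x (2 * n + i)))
      = (\<Sum>z\<in>paths n. \<Sum>z'\<in>paths n. w z * v z' * trans_power p q (Suc n) (z (n - 1)) (z' 0) * F z z')"
    unfolding blocks path_prob_3n sum_chain_weight_gap[OF pq n(1) n(1) n(1)]
    by (simp add: w_def v_def ac_simps)
  have indep: "(\<Sum>x\<in>paths (3 * n). \<Sum>x'\<in>paths (3 * n). path_prob p q (3 * n) x * path_prob p q (3 * n) x' *
        F (restrict x {..<n}) (restrict x' {..<n}))
      = (\<Sum>z\<in>paths n. \<Sum>z'\<in>paths n. w z * v z' * \<pi> (z' 0) * F z z')"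
    unfolding blocks path_prob_3n sum_chain_weight_prefix_pair[OF pq n] w_def v_def
      chain_weight_eq_initial_times_transitions[of p q \<pi> n]
    by (simp add: ac_simps)
  show ?thesis
    using abs_sum_trans_power_deviation_le[where F = F and k = "Suc n", OF p q n(1) n(1) F]
    unfolding joint indep w_def v_def \<pi>_def
    by (simp add: sum_subtractf[symmetric] algebra_simps)
qed

lemma path_prob_nonneg:
  assumes "0 < p" "p \<le> 1" "0 < q" "q \<le> 1"
  shows "0 \<le> path_prob p q N x"
proof (cases N)
  case (Suc m)
  then show ?thesis
    using assms by (auto simp: path_prob_eq_chain_weight stat_prob_def intro!: chain_weight_nonneg)
qed (simp add: path_prob_def)

context
  fixes f0 f1 :: "real \<Rightarrow> real"
  assumes f0: "prob_density01 f0" and f1: "prob_density01 f1"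
begin

lemma borel_measurable_emis [measurable]: "emis f0 f1 b \<in> borel_measurable borel"
proof -
  have [measurable]: "f0 \<in> borel_measurable borel" "f1 \<in> borel_measurable borel"
    using f0 f1 by (simp_all add: prob_density01_def)
  show ?thesis unfolding emis_def by measurable
qed

lemma emis_nonneg: "0 \<le> emis f0 f1 b y"
  using f0 f1 by (auto simp: emis_def prob_density01_def indicator_def)

definition emission_measure :: "bool \<Rightarrow> real measure" where
  "emission_measure b = density lborel (\<lambda>y. ennreal (emis f0 f1 b y))"

lemma sets_emission_measure [simp, measurable_cong]: "sets (emission_measure b) = sets borel"
  by (simp add: emission_measure_def)

lemma prob_space_emission_measure: "prob_space (emission_measure b)"
proof (rule prob_spaceI)
  have "emeasure (emission_measure b) (space (emission_measure b))
      = (\<integral>\<^sup>+ y. ennreal (emis f0 f1 b y) \<partial>lborel)"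
    by (simp add: emission_measure_def emeasure_density)
  also have "\<dots> = 1"
    using f0 f1 by (cases b) (simp_all add: emis_def prob_density01_def)
  finally show "emeasure (emission_measure b) (space (emission_measure b)) = 1" .
qed

lemma product_prob_space_emission_measure: "product_prob_space (\<lambda>i. emission_measure (x i))"
  by (simp add: product_prob_space_def product_prob_space_axioms_def product_sigma_finite_def
      prob_space_emission_measure prob_space_imp_sigma_finite)

definition emission_law :: "nat set \<Rightarrow> (nat \<Rightarrow> bool) \<Rightarrow> (nat \<Rightarrow> real) measure" where
  "emission_law I x = PiM I (\<lambda>i. emission_measure (x i))"

lemma sets_emission_law [measurable_cong]: "sets (emission_law I x) = sets (PiM I (\<lambda>_. lborel))"
  unfolding emission_law_def by (rule sets_PiM_cong) auto

lemma prob_space_emission_law: "prob_space (emission_law I x)"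
  unfolding emission_law_def by (intro prob_space_PiM prob_space_emission_measure)

lemma emission_law_restrict: "emission_law I (restrict x I) = emission_law I x"
  unfolding emission_law_def by (rule PiM_cong) auto

lemma emission_law_eq_density:
  assumes I: "finite I"
  shows "emission_law I x =
    density (PiM I (\<lambda>_. lborel)) (\<lambda>y. \<Prod>i\<in>I. ennreal (emis f0 f1 (x i) (y i)))"
  unfolding emission_law_def
proof (rule product_sigma_finite.PiM_eqI[OF _ I, symmetric])
  interpret product_prob_space "\<lambda>i. emission_measure (x i)"
    by (rule product_prob_space_emission_measure)
  show "product_sigma_finite (\<lambda>i. emission_measure (x i))" ..
  show "sets (density (PiM I (\<lambda>_. lborel)) (\<lambda>y. \<Prod>i\<in>I. ennreal (emis f0 f1 (x i) (y i))))
      = sets (PiM I (\<lambda>i. emission_measure (x i)))"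
    by (simp cong: sets_PiM_cong)
  fix A assume "\<And>i. i \<in> I \<Longrightarrow> A i \<in> sets (emission_measure (x i))"
  then have A: "A i \<in> sets borel" if "i \<in> I" for i using that by simp
  have "emeasure (density (PiM I (\<lambda>_. lborel)) (\<lambda>y. \<Prod>i\<in>I. ennreal (emis f0 f1 (x i) (y i)))) (Pi\<^sub>E I A)
      = (\<integral>\<^sup>+ y. (\<Prod>i\<in>I. ennreal (emis f0 f1 (x i) (y i))) * indicator (Pi\<^sub>E I A) y \<partial>PiM I (\<lambda>_. lborel))"
    using A by (intro emeasure_density) (auto intro!: sets_PiM_I_finite I)
  also have "\<dots> = (\<integral>\<^sup>+ y. (\<Prod>i\<in>I. ennreal (emis f0 f1 (x i) (y i)) * indicator (A i) (y i)) \<partial>PiM I (\<lambda>_. lborel))"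
    using I by (intro nn_integral_cong)
       (auto simp: prod.distrib indicator_def space_PiM PiE_iff intro: prod_zero)
  also have "\<dots> = (\<Prod>i\<in>I. \<integral>\<^sup>+ y. ennreal (emis f0 f1 (x i) y) * indicator (A i) y \<partial>lborel)"
    using A by (intro product_sigma_finite.product_nn_integral_prod I)
      (auto simp: product_sigma_finite_def intro: sigma_finite_lborel)
  also have "\<dots> = (\<Prod>i\<in>I. emeasure (emission_measure (x i)) (A i))"
    using A by (intro prod.cong refl) (simp add: emission_measure_def emeasure_density)
  finally show "emeasure (density (PiM I (\<lambda>_. lborel)) (\<lambda>y. \<Prod>i\<in>I. ennreal (emis f0 f1 (x i) (y i)))) (Pi\<^sub>E I A)
      = (\<Prod>i\<in>I. emeasure (emission_measure (x i)) (A i))" .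
qed

lemma nn_integral_distr_hmm_law:
  assumes p: "0 < p" "p \<le> 1" and q: "0 < q" "q \<le> 1"
    and T [measurable]: "T \<in> measurable (PiM {..<N} (\<lambda>_. lborel)) M"
    and g [measurable]: "g \<in> borel_measurable M"
  shows "(\<integral>\<^sup>+ y. g y \<partial>distr (hmm_law p q f0 f1 N) M T)
       = (\<Sum>x\<in>paths N. ennreal (path_prob p q N x) * (\<integral>\<^sup>+ y. g y \<partial>distr (emission_law {..<N} x) M T))"
proof -
  have mixture: "ennreal (\<Sum>x \<in> paths N. path_prob p q N x * (\<Prod>i<N. emis f0 f1 (x i) (y i)))
     = (\<Sum>x\<in>paths N. ennreal (path_prob p q N x) * (\<Prod>i<N. ennreal (emis f0 f1 (x i) (y i))))" for y
    using path_prob_nonneg[OF p q] emis_nonneg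
    by (simp add: sum_ennreal[symmetric] prod_nonneg ennreal_mult prod_ennreal)
  have "(\<integral>\<^sup>+ y. g y \<partial>distr (hmm_law p q f0 f1 N) M T) = (\<integral>\<^sup>+ y. g (T y) \<partial>hmm_law p q f0 f1 N)"
    by (rule nn_integral_distr) (simp_all add: hmm_law_def)
  also have "\<dots> = (\<integral>\<^sup>+ y. (\<Sum>x\<in>paths N. ennreal (path_prob p q N x) *
      (\<Prod>i<N. ennreal (emis f0 f1 (x i) (y i)))) * g (T y) \<partial>PiM {..<N} (\<lambda>_. lborel))"
    unfolding hmm_law_def paths_def[symmetric] mixture by (rule nn_integral_density) measurable
  also have "\<dots> = (\<Sum>x\<in>paths N. ennreal (path_prob p q N x) *
      (\<integral>\<^sup>+ y. (\<Prod>i<N. ennreal (emis f0 f1 (x i) (y i))) * g (T y) \<partial>PiM {..<N} (\<lambda>_. lborel)))"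
    by (simp add: sum_distrib_right mult.assoc nn_integral_sum nn_integral_cmult)
  also have "\<dots> = (\<Sum>x\<in>paths N. ennreal (path_prob p q N x) * (\<integral>\<^sup>+ y. g y \<partial>distr (emission_law {..<N} x) M T))"
    by (simp add: emission_law_eq_density nn_integral_density nn_integral_distr)
  finally show ?thesis .
qed

lemma distr_emission_law_restrict:
  assumes "J \<subseteq> I" "finite I"
  shows "distr (emission_law I x) (PiM J (\<lambda>_. lborel)) (\<lambda>y. restrict y J) = emission_law J x"
proof -
  interpret product_prob_space "\<lambda>i. emission_measure (x i)"
    by (rule product_prob_space_emission_measure)
  have "emission_law J x = distr (emission_law I x) (emission_law J x) (\<lambda>y. restrict y J)"
    unfolding emission_law_def using assms by (rule distr_restrict)
  also have "\<dots> = distr (emission_law I x) (PiM J (\<lambda>_. lborel)) (\<lambda>y. restrict y J)"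
    by (intro distr_cong refl sets_emission_law)
  finally show ?thesis ..
qed

lemma distr_emission_law_shift:
  "distr (PiM {m..<m + n} (\<lambda>i. emission_measure (x i))) (PiM {..<n} (\<lambda>_. lborel))
     (\<lambda>v. \<lambda>i\<in>{..<n}. v (m + i))
   = emission_law {..<n} (\<lambda>i. x (m + i))"
proof -
  have "distr (PiM {m..<m + n} (\<lambda>i. emission_measure (x i))) (PiM {..<n} (\<lambda>_. lborel))
      (\<lambda>v. \<lambda>i\<in>{..<n}. v (m + i))
    = distr (PiM {m..<m + n} (\<lambda>i. emission_measure (x i)))
      (PiM {..<n} (\<lambda>i. emission_measure (x (m + i)))) (\<lambda>v. \<lambda>i\<in>{..<n}. v (m + i))"
    by (intro distr_cong refl) (rule sets_PiM_cong, auto)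
  also have "\<dots> = emission_law {..<n} (\<lambda>i. x (m + i))"
    unfolding emission_law_def
    by (rule distr_PiM_reindex) (auto intro: prob_space_emission_measure inj_onI)
  finally show ?thesis .
qed

lemma distr_emission_law_blocks:
  assumes "n \<le> m" "m + n \<le> N"
  shows "distr (emission_law {..<N} x) (PiM {..<n} (\<lambda>_. lborel) \<Otimes>\<^sub>M PiM {..<n} (\<lambda>_. lborel))
           (\<lambda>y. (restrict y {..<n}, \<lambda>i\<in>{..<n}. y (m + i)))
       = emission_law {..<n} x \<Otimes>\<^sub>M emission_law {..<n} (\<lambda>i. x (m + i))"
proof -
  let ?M = "\<lambda>i. emission_measure (x i)"
  let ?I = "{..<n}" and ?J = "{m..<m + n}"
  let ?P = "PiM {..<n} (\<lambda>_. lborel) :: (nat \<Rightarrow> real) measure"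
  let ?blocks = "\<lambda>y. (restrict y ?I, \<lambda>i\<in>{..<n}. y (m + i))"
  let ?shift = "\<lambda>v. \<lambda>i\<in>{..<n}. v (m + i)"
  interpret product_prob_space ?M by (rule product_prob_space_emission_measure)
  have IJ: "?I \<inter> ?J = {}" "?I \<union> ?J \<subseteq> {..<N}" using assms by auto
  have "distr (emission_law {..<N} x) (?P \<Otimes>\<^sub>M ?P) ?blocks
      = distr (PiM {..<N} ?M) (?P \<Otimes>\<^sub>M ?P) (?blocks \<circ> (\<lambda>y. restrict y (?I \<union> ?J)))"
    unfolding emission_law_def by (intro distr_cong refl) (auto simp: fun_eq_iff)
  also have "\<dots> = distr (distr (PiM {..<N} ?M) (PiM (?I \<union> ?J) ?M) (\<lambda>y. restrict y (?I \<union> ?J)))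
      (?P \<Otimes>\<^sub>M ?P) ?blocks"
    using IJ by (intro distr_distr[symmetric] measurable_restrict_subset) measurable
  also have "distr (PiM {..<N} ?M) (PiM (?I \<union> ?J) ?M) (\<lambda>y. restrict y (?I \<union> ?J)) = PiM (?I \<union> ?J) ?M"
    using IJ by (intro distr_restrict[symmetric]) auto
  also have "\<dots> = distr (PiM ?I ?M \<Otimes>\<^sub>M PiM ?J ?M) (PiM (?I \<union> ?J) ?M) (merge ?I ?J)"
    using IJ by (intro distr_merge[symmetric]) auto
  also have "distr \<dots> (?P \<Otimes>\<^sub>M ?P) ?blocks = distr (PiM ?I ?M \<Otimes>\<^sub>M PiM ?J ?M) (?P \<Otimes>\<^sub>M ?P) (?blocks \<circ> merge ?I ?J)"
    by (rule distr_distr) measurable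
  also have "\<dots> = distr (PiM ?I ?M \<Otimes>\<^sub>M PiM ?J ?M) (?P \<Otimes>\<^sub>M ?P) (\<lambda>(u, v). (u, ?shift v))"
    using assms by (intro distr_cong refl)
       (auto simp: space_pair_measure space_PiM PiE_iff merge_def fun_eq_iff extensional_def)
  also have "\<dots> = distr (PiM ?I ?M) ?P (\<lambda>u. u) \<Otimes>\<^sub>M distr (PiM ?J ?M) ?P ?shift"
  proof (rule pair_measure_distr[symmetric])
    show "(\<lambda>u. u) \<in> measurable (PiM ?I ?M) ?P"
      by (rule measurable_ident_sets) (rule sets_PiM_cong, auto)
    show shift: "?shift \<in> measurable (PiM ?J ?M) ?P"
      by measurable
    show "sigma_finite_measure (distr (PiM ?J ?M) ?P ?shift)"
      by (intro prob_space_imp_sigma_finite prob_space.prob_space_distr shift prob_space_PiM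
          prob_space_emission_measure)
  qed
  also have "distr (PiM ?I ?M) ?P (\<lambda>u. u) = emission_law {..<n} x"
    unfolding emission_law_def by (rule distr_id2) (rule sets_PiM_cong, auto)
  also have "distr (PiM ?J ?M) ?P ?shift = emission_law {..<n} (\<lambda>i. x (m + i))"
    by (rule distr_emission_law_shift)
  finally show ?thesis .
qed

lemma nn_integral_law_Y':
  assumes "0 < p" "p \<le> 1" "0 < q" "q \<le> 1" and [measurable]: "g \<in> borel_measurable (PiM {..<n} (\<lambda>_. lborel))"
  shows "(\<integral>\<^sup>+ y. g y \<partial>law_Y' p q f0 f1 n)
       = (\<Sum>x\<in>paths (3 * n). ennreal (path_prob p q (3 * n) x) * (\<integral>\<^sup>+ y. g y \<partial>emission_law {..<n} x))"
  unfolding law_Y'_def using assms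
  by (simp add: nn_integral_distr_hmm_law distr_emission_law_restrict)

lemma emeasure_law_pair:
  assumes "0 < p" "p \<le> 1" "0 < q" "q \<le> 1"
    and A: "A \<in> sets (PiM {..<n} (\<lambda>_. lborel) \<Otimes>\<^sub>M PiM {..<n} (\<lambda>_. lborel))"
  shows "emeasure (law_pair p q f0 f1 n) A = (\<Sum>x\<in>paths (3 * n). ennreal (path_prob p q (3 * n) x) *
     emeasure (emission_law {..<n} x \<Otimes>\<^sub>M emission_law {..<n} (\<lambda>i. x (2 * n + i))) A)"
proof -
  have [measurable]: "A \<in> sets (PiM {..<n} (\<lambda>_. lborel) \<Otimes>\<^sub>M PiM {..<n} (\<lambda>_. lborel))" by (fact A)
  have "emeasure (law_pair p q f0 f1 n) A = (\<integral>\<^sup>+ w. indicator A w \<partial>law_pair p q f0 f1 n)"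
    using A by (simp add: law_pair_def)
  also have "\<dots> = (\<Sum>x\<in>paths (3 * n). ennreal (path_prob p q (3 * n) x) *
      (\<integral>\<^sup>+ w. indicator A w \<partial>distr (emission_law {..<3 * n} x)
         (PiM {..<n} (\<lambda>_. lborel) \<Otimes>\<^sub>M PiM {..<n} (\<lambda>_. lborel))
         (\<lambda>y. (restrict y {..<n}, \<lambda>i\<in>{..<n}. y (2 * n + i)))))"
    unfolding law_pair_def by (rule nn_integral_distr_hmm_law[OF assms(1-4)]) measurable
  also have "\<dots> = (\<Sum>x\<in>paths (3 * n). ennreal (path_prob p q (3 * n) x) *
     emeasure (emission_law {..<n} x \<Otimes>\<^sub>M emission_law {..<n} (\<lambda>i. x (2 * n + i))) A)"
    using A by (simp add: distr_emission_law_blocks sets_pair_measure_cong[OF sets_emission_law sets_emission_law])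
  finally show ?thesis .
qed

lemma finite_measure_law_Y':
  assumes "0 < p" "p \<le> 1" "0 < q" "q \<le> 1"
  shows "finite_measure (law_Y' p q f0 f1 n)"
proof (rule finite_measureI)
  have "emeasure (law_Y' p q f0 f1 n) (space (law_Y' p q f0 f1 n))
      = (\<Sum>x\<in>paths (3 * n). ennreal (path_prob p q (3 * n) x))"
    using nn_integral_law_Y'[OF assms, where g = "\<lambda>_. 1"]
    by (simp add: prob_space.emeasure_space_1[OF prob_space_emission_law])
  then show "emeasure (law_Y' p q f0 f1 n) (space (law_Y' p q f0 f1 n)) \<noteq> \<infinity>"
    by (simp add: ennreal_sum_eq_top)
qed

lemma emeasure_law_Y'_pair:
  assumes pq: "0 < p" "p \<le> 1" "0 < q" "q \<le> 1"
    and A: "A \<in> sets (PiM {..<n} (\<lambda>_. lborel) \<Otimes>\<^sub>M PiM {..<n} (\<lambda>_. lborel))"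
  shows "emeasure (law_Y' p q f0 f1 n \<Otimes>\<^sub>M law_Y' p q f0 f1 n) A =
    (\<Sum>x\<in>paths (3 * n). \<Sum>x'\<in>paths (3 * n).
       ennreal (path_prob p q (3 * n) x) * ennreal (path_prob p q (3 * n) x') *
       emeasure (emission_law {..<n} x \<Otimes>\<^sub>M emission_law {..<n} x') A)"
proof -
  let ?L = "law_Y' p q f0 f1 n" and ?Q = "emission_law {..<n}"
  let ?w = "\<lambda>x. ennreal (path_prob p q (3 * n) x)"
  let ?P = "PiM {..<n} (\<lambda>_. lborel) :: (nat \<Rightarrow> real) measure"
  have [measurable]: "A \<in> sets (?P \<Otimes>\<^sub>M ?P)" by (fact A)
  have sets_L [measurable_cong]: "sets ?L = sets ?P" by (simp add: law_Y'_def)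
  interpret L: finite_measure ?L by (rule finite_measure_law_Y'[OF pq])
  have inner [measurable]: "(\<lambda>y. \<integral>\<^sup>+ y'. indicator A (y, y') \<partial>?Q x') \<in> borel_measurable ?P" for x'
  proof -
    interpret prob_space "?Q x'" by (rule prob_space_emission_law)
    show ?thesis
      by (rule borel_measurable_nn_integral) (simp cong: sets_pair_measure_cong[OF refl sets_emission_law])
  qed
  have "emeasure (?L \<Otimes>\<^sub>M ?L) A = (\<integral>\<^sup>+ y. \<integral>\<^sup>+ y'. indicator A (y, y') \<partial>?L \<partial>?L)"
    by (rule L.emeasure_pair_measure) (simp cong: sets_pair_measure_cong[OF sets_L sets_L])
  also have "\<dots> = (\<integral>\<^sup>+ y. (\<Sum>x'\<in>paths (3 * n). ?w x' * \<integral>\<^sup>+ y'. indicator A (y, y') \<partial>?Q x') \<partial>?L)"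
  proof (rule nn_integral_cong)
    fix y assume "y \<in> space ?L"
    then have y: "y \<in> space ?P" by (simp add: sets_eq_imp_space_eq[OF sets_L])
    show "(\<integral>\<^sup>+ y'. indicator A (y, y') \<partial>?L)
        = (\<Sum>x'\<in>paths (3 * n). ?w x' * \<integral>\<^sup>+ y'. indicator A (y, y') \<partial>?Q x')"
      by (intro nn_integral_law_Y'[OF pq] measurable_Pair2[OF _ y]) simp
  qed
  also have "\<dots> = (\<Sum>x\<in>paths (3 * n). ?w x *
      \<integral>\<^sup>+ y. (\<Sum>x'\<in>paths (3 * n). ?w x' * \<integral>\<^sup>+ y'. indicator A (y, y') \<partial>?Q x') \<partial>?Q x)"
    by (rule nn_integral_law_Y'[OF pq]) measurable
  also have "\<dots> = (\<Sum>x\<in>paths (3 * n). \<Sum>x'\<in>paths (3 * n). ?w x * ?w x' *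
      \<integral>\<^sup>+ y. \<integral>\<^sup>+ y'. indicator A (y, y') \<partial>?Q x' \<partial>?Q x)"
    by (simp add: nn_integral_sum nn_integral_cmult sum_distrib_left mult.assoc)
  also have "\<dots> = (\<Sum>x\<in>paths (3 * n). \<Sum>x'\<in>paths (3 * n). ?w x * ?w x' * emeasure (?Q x \<Otimes>\<^sub>M ?Q x') A)"
  proof (intro sum.cong refl arg_cong2[where f = "(*)"])
    fix x x'
    interpret prob_space "?Q x'" by (rule prob_space_emission_law)
    show "(\<integral>\<^sup>+ y. \<integral>\<^sup>+ y'. indicator A (y, y') \<partial>?Q x' \<partial>?Q x) = emeasure (?Q x \<Otimes>\<^sub>M ?Q x') A"
      by (rule emeasure_pair_measure[symmetric])
         (simp cong: sets_pair_measure_cong[OF sets_emission_law sets_emission_law])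
  qed
  finally show ?thesis .
qed

lemma tv_dist_law_pair_le:
  assumes p: "0 < p" "p \<le> 1" and q: "0 < q" "q \<le> 1"
  shows "tv_dist (law_pair p q f0 f1 n) (law_Y' p q f0 f1 n \<Otimes>\<^sub>M law_Y' p q f0 f1 n)
       \<le> 2 * \<bar>1 - p - q\<bar> ^ (n + 1)"
  unfolding tv_dist_def
proof (rule cSUP_least)
  show "sets (law_pair p q f0 f1 n) \<noteq> {}" using sets.empty_sets by blast
  fix A assume "A \<in> sets (law_pair p q f0 f1 n)"
  then have A: "A \<in> sets (PiM {..<n} (\<lambda>_. lborel) \<Otimes>\<^sub>M PiM {..<n} (\<lambda>_. lborel))"
    by (simp add: law_pair_def)
  define F where "F z z' = measure (emission_law {..<n} z \<Otimes>\<^sub>M emission_law {..<n} z') A" for z z'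
  have prob: "prob_space (emission_law {..<n} z \<Otimes>\<^sub>M emission_law {..<n} z')" for z z'
    by (intro prob_space_pair prob_space_emission_law)
  have F_bounds: "0 \<le> F z z'" "F z z' \<le> 1" for z z'
    unfolding F_def using prob_space.prob_le_1[OF prob] by simp_all
  have emeasure_eq_F: "emeasure (emission_law {..<n} x \<Otimes>\<^sub>M emission_law {..<n} x') A
      = ennreal (F (restrict x {..<n}) (restrict x' {..<n}))" for x x'
    unfolding F_def emission_law_restrict
    by (rule finite_measure.emeasure_eq_measure[OF prob_space.axioms(1)[OF prob]])
  have w: "0 \<le> path_prob p q (3 * n) x" for x by (rule path_prob_nonneg[OF p q])
  have "measure (law_pair p q f0 f1 n) A = (\<Sum>x\<in>paths (3 * n). path_prob p q (3 * n) x *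
      F (restrict x {..<n}) (\<lambda>i\<in>{..<n}. x (2 * n + i)))"
    unfolding measure_def emeasure_law_pair[OF p q A] emeasure_eq_F
    using w F_bounds by (simp add: ennreal_mult[symmetric] sum_nonneg)
  moreover have "measure (law_Y' p q f0 f1 n \<Otimes>\<^sub>M law_Y' p q f0 f1 n) A
    = (\<Sum>x\<in>paths (3 * n). \<Sum>x'\<in>paths (3 * n). path_prob p q (3 * n) x * path_prob p q (3 * n) x' *
        F (restrict x {..<n}) (restrict x' {..<n}))"
    unfolding measure_def emeasure_law_Y'_pair[OF p q A] emeasure_eq_F
    using w F_bounds by (simp add: ennreal_mult[symmetric] sum_nonneg)
  ultimately show "\<bar>measure (law_pair p q f0 f1 n) A
      - measure (law_Y' p q f0 f1 n \<Otimes>\<^sub>M law_Y' p q f0 f1 n) A\<bar> \<le> 2 * \<bar>1 - p - q\<bar> ^ (n + 1)"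
    using abs_sum_path_prob_gap_le[OF p q F_bounds] by simp
qed

end

lemma power_le_exp_gap:
  fixes r \<gamma> :: real
  assumes "0 \<le> r" "r \<le> 1 - \<gamma>"
  shows "r ^ n \<le> exp (- \<gamma> * real n)"
proof -
  have "r ^ n \<le> (1 - \<gamma>) ^ n"
    using assms by (intro power_mono)
  also have "\<dots> \<le> exp (- \<gamma>) ^ n"
    using assms exp_ge_add_one_self[of "- \<gamma>"] by (intro power_mono) simp_all
  also have "\<dots> = exp (- \<gamma> * real n)"
    by (simp add: exp_of_nat_mult[symmetric] mult.commute)
  finally show ?thesis .
qed

lemma tv_dist_law_pair_le_exp:
  assumes "prob_density01 f0" "prob_density01 f1"
    and p: "0 < p" "p \<le> 1" and q: "0 < q" "q \<le> 1" and gap: "\<gamma> \<le> 1 - \<bar>1 - p - q\<bar>"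
  shows "tv_dist (law_pair p q f0 f1 n) (law_Y' p q f0 f1 n \<Otimes>\<^sub>M law_Y' p q f0 f1 n)
       \<le> 2 * exp (- \<gamma> * real n)"
proof -
  have "tv_dist (law_pair p q f0 f1 n) (law_Y' p q f0 f1 n \<Otimes>\<^sub>M law_Y' p q f0 f1 n)
      \<le> 2 * \<bar>1 - p - q\<bar> ^ (n + 1)"
    by (rule tv_dist_law_pair_le[OF assms(1-6)])
  also have "\<dots> \<le> 2 * \<bar>1 - p - q\<bar> ^ n"
    using p q by (intro mult_left_mono power_decreasing) auto
  also have "\<dots> \<le> 2 * exp (- \<gamma> * real n)"
    using gap by (intro mult_left_mono power_le_exp_gap) auto
  finally show ?thesis .
qed

theorem proposition1:
  "\<exists>C c :: real. C > 0 \<and> c > 0 \<and>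
     (\<forall>p q :: real. \<forall>f0 f1 :: real \<Rightarrow> real. \<forall>\<gamma> :: real. \<forall>n :: nat.
        0 < p \<and> p \<le> 1 \<and> 0 < q \<and> q \<le> 1 \<and>
        prob_density01 f0 \<and> prob_density01 f1 \<and>
        1 - \<bar>1 - p - q\<bar> \<ge> \<gamma> \<longrightarrow>
        tv_dist (law_pair p q f0 f1 n) (law_Y' p q f0 f1 n \<Otimes>\<^sub>M law_Y' p q f0 f1 n)
          \<le> C * exp (- c * \<gamma> * real n))"
proof (rule exI[of _ 2], rule exI[of _ 1], intro conjI allI impI)
  fix p q :: real and f0 f1 :: "real \<Rightarrow> real" and \<gamma> :: real and n :: nat
  assume "0 < p \<and> p \<le> 1 \<and> 0 < q \<and> q \<le> 1 \<and> prob_density01 f0 \<and> prob_density01 f1 \<and>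
    1 - \<bar>1 - p - q\<bar> \<ge> \<gamma>"
  then show "tv_dist (law_pair p q f0 f1 n) (law_Y' p q f0 f1 n \<Otimes>\<^sub>M law_Y' p q f0 f1 n)
      \<le> 2 * exp (- 1 * \<gamma> * real n)"
    using tv_dist_law_pair_le_exp[of f0 f1 p q \<gamma> n] by simp
qed simp_all

end
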